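(* Let $n\ge 1$, $m\ge 2$, $0\le k\le n-1$. The maximum possible size of a $k$-bounded acyclic CP-net over $n$ variables of domain size $m$ is $\mathcal{M}_k=(n-k)m^k+\frac{m^k-1}{m-1}$.
   Context: Variables $V=\{v_1,\dots,v_n\}$, each with a finite domain of size $m$. A CP-net specifies for each $v_i$ a parent set $Pa(v_i)\subseteq V\setminus\{v_i\}$ and a conditional preference table $\mathrm{CPT}(v_i)$ which, for each assignment $\gamma$ of values to the variables in $Pa(v_i)$, either contains one statement (a strict total order on the domain of $v_i$) or contains nothing; parents are non-dummy (each actually affects the preferences). The CP-net is acyclic if the graph with edges $(v_j,v_i)$ for $v_j\in Pa(v_i)$ is acyclic, and $k$-bounded if all $|Pa(v_i)|\le k$. The size of $\mathrm{CPT}(v_i)$ is its number of statements (at most $m^{|Pa(v_i)|}$), and the size of the CP-net is the sum of the sizes of its CPTs. *)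

theory Defs
  imports Complex_Main "HOL-Library.FuncSet"
begin

text \<open>Variables are v_0,...,v_(n-1) (indices below n); every domain is {0..<m}.
  A CP-net is given by a parent map Pa and a CPT map cpt: cpt i g is the
  statement of CPT(v_i) for the parent assignment g (None = no statement);
  a statement is a strict total order (as a relation) on the domain.\<close>

definition assignments :: "nat \<Rightarrow> nat set \<Rightarrow> (nat \<Rightarrow> nat) set" where
  "assignments m P = PiE P (\<lambda>_. {..<m})"

definition is_strict_total_order :: "nat \<Rightarrow> (nat \<times> nat) set \<Rightarrow> bool" where
  "is_strict_total_order m r \<longleftrightarrow> r \<subseteq> {..<m} \<times> {..<m} \<and> strict_linear_order_on {..<m} r"

definition cpnet :: "nat \<Rightarrow> nat \<Rightarrow> (nat \<Rightarrow> nat set)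
    \<Rightarrow> (nat \<Rightarrow> (nat \<Rightarrow> nat) \<Rightarrow> (nat \<times> nat) set option) \<Rightarrow> bool" where
  "cpnet n m Pa cpt \<longleftrightarrow>
     (\<forall>i<n. Pa i \<subseteq> {..<n} - {i}) \<and>
     (\<forall>i<n. \<forall>g\<in>assignments m (Pa i). \<forall>r. cpt i g = Some r \<longrightarrow> is_strict_total_order m r) \<and>
     \<comment> \<open>non-dummy parents: changing only the value of the parent changes CPT(v_i)\<close>
     (\<forall>i<n. \<forall>j\<in>Pa i. \<exists>g\<in>assignments m (Pa i). \<exists>g'\<in>assignments m (Pa i).
         (\<forall>l\<in>Pa i - {j}. g l = g' l) \<and> cpt i g \<noteq> cpt i g')"

definition cpnet_acyclic :: "nat \<Rightarrow> (nat \<Rightarrow> nat set) \<Rightarrow> bool" where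
  "cpnet_acyclic n Pa \<longleftrightarrow> acyclic {(j, i). i < n \<and> j \<in> Pa i}"

definition k_bounded :: "nat \<Rightarrow> nat \<Rightarrow> (nat \<Rightarrow> nat set) \<Rightarrow> bool" where
  "k_bounded n k Pa \<longleftrightarrow> (\<forall>i<n. card (Pa i) \<le> k)"

definition cpt_size :: "nat \<Rightarrow> (nat \<Rightarrow> nat set)
    \<Rightarrow> (nat \<Rightarrow> (nat \<Rightarrow> nat) \<Rightarrow> (nat \<times> nat) set option) \<Rightarrow> nat \<Rightarrow> nat" where
  "cpt_size m Pa cpt i = card {g \<in> assignments m (Pa i). cpt i g \<noteq> None}"

definition cpnet_size :: "nat \<Rightarrow> nat \<Rightarrow> (nat \<Rightarrow> nat set)
    \<Rightarrow> (nat \<Rightarrow> (nat \<Rightarrow> nat) \<Rightarrow> (nat \<times> nat) set option) \<Rightarrow> nat" where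
  "cpnet_size n m Pa cpt = (\<Sum>i<n. cpt_size m Pa cpt i)"

end

theory Submission
  imports Defs
begin

text \<open>Upper bound: a CPT has at most m^|Pa(v)| statements. Process the variables of an acyclic
  net source-first; the j-th variable processed has at most min j k parents among the earlier
  ones, so the size is at most the sum over j < n of m^(min j k), which evaluates to the formula.
  Lower bound: the chain net Pa(v_i) = {v_j | j < min i k} with full CPTs whose order flips with
  the parity of the parent values attains this sum, and the parity makes every parent non-dummy.\<close>

lemma card_assignments: "finite P \<Longrightarrow> card (assignments m P) = m ^ card P"
  by (simp add: assignments_def card_PiE)

lemma cpt_size_le:
  assumes "finite (Pa i)"
  shows "cpt_size m Pa cpt i \<le> m ^ card (Pa i)"
proof -
  have "cpt_size m Pa cpt i \<le> card (assignments m (Pa i))"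
    unfolding cpt_size_def using assms by (intro card_mono) (auto simp: assignments_def finite_PiE)
  then show ?thesis using card_assignments[OF assms] by simp
qed

lemma sum_power_card_le_if_wf:
  fixes m :: nat
  assumes "m \<ge> 1" and "finite S" and "wf R"
    and "\<forall>i\<in>S. Pa i \<subseteq> S - {i}" and "\<forall>i\<in>S. card (Pa i) \<le> k"
    and "\<forall>i\<in>S. \<forall>j\<in>Pa i. (i, j) \<in> R"
  shows "(\<Sum>i\<in>S. m ^ card (Pa i)) \<le> (\<Sum>j<card S. m ^ min j k)"
  using assms(2-)
proof (induction "card S" arbitrary: S)
  case 0
  then show ?case by simp
next
  case (Suc c)
  then have "S \<noteq> {}" by auto
  with wf_eq_minimal[THEN iffD1, OF \<open>wf R\<close>]
  obtain v where v: "v \<in> S" "\<forall>y. (y, v) \<in> R \<longrightarrow> y \<notin> S" by blast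
  \<comment> \<open>v is a parent of no other variable of S, so it can be removed first\<close>
  have card_rest: "card (S - {v}) = c" using Suc.hyps(2) v(1) Suc.prems(1) by simp
  have "\<forall>i\<in>S - {v}. Pa i \<subseteq> S - {v} - {i}" using v Suc.prems(3,5) by blast
  then have IH: "(\<Sum>i\<in>S - {v}. m ^ card (Pa i)) \<le> (\<Sum>j<c. m ^ min j k)"
    using Suc.hyps(1)[of "S - {v}"] card_rest Suc.prems by auto
  have "card (Pa v) \<le> card (S - {v})"
    using Suc.prems(1,3) v(1) by (intro card_mono) auto
  then have "card (Pa v) \<le> min c k" using card_rest Suc.prems(4) v(1) by auto
  then have pv: "m ^ card (Pa v) \<le> m ^ min c k" using assms(1) by (intro power_increasing)
  have "(\<Sum>i\<in>S. m ^ card (Pa i)) = m ^ card (Pa v) + (\<Sum>i\<in>S - {v}. m ^ card (Pa i))"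
    using v(1) Suc.prems(1) by (simp add: sum.remove)
  also have "\<dots> \<le> m ^ min c k + (\<Sum>j<c. m ^ min j k)" using IH pv by simp
  also have "\<dots> = (\<Sum>j<card S. m ^ min j k)" using Suc.hyps(2)[symmetric] by simp
  finally show ?case .
qed

lemma sum_power_min_eq:
  fixes m n k :: nat
  assumes "m \<ge> 2" "k \<le> n"
  shows "real (\<Sum>j<n. m ^ min j k) = real (n - k) * real m ^ k + (real m ^ k - 1) / (real m - 1)"
proof -
  have split: "{..<n} = {..<k} \<union> {k..<n}" using assms by auto
  have "(\<Sum>j<n. m ^ min j k) = (\<Sum>j<k. m ^ min j k) + (\<Sum>j\<in>{k..<n}. m ^ min j k)"
    unfolding split by (rule sum.union_disjoint) auto
  also have "(\<Sum>j<k. m ^ min j k) = (\<Sum>j<k. m ^ j)" by (intro sum.cong) auto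
  also have "(\<Sum>j\<in>{k..<n}. m ^ min j k) = (\<Sum>j\<in>{k..<n}. m ^ k)" by (intro sum.cong) auto
  finally have "(\<Sum>j<n. m ^ min j k) = (\<Sum>j<k. m ^ j) + (n - k) * m ^ k" by simp
  moreover have "(\<Sum>j<k. real m ^ j) = (real m ^ k - 1) / (real m - 1)"
    using assms by (intro geometric_sum) auto
  ultimately show ?thesis by (simp add: of_nat_diff assms)
qed

lemma cpnet_size_le:
  assumes "m \<ge> 1" and "cpnet n m Pa cpt" and "cpnet_acyclic n Pa" and "k_bounded n k Pa"
  shows "cpnet_size n m Pa cpt \<le> (\<Sum>j<n. m ^ min j k)"
proof -
  let ?E = "{(j, i). i < n \<and> j \<in> Pa i}"
  have sub: "\<forall>i<n. Pa i \<subseteq> {..<n} - {i}" using assms(2) by (simp add: cpnet_def)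
  then have fin: "\<And>i. i < n \<Longrightarrow> finite (Pa i)" by (meson finite_Diff finite_lessThan finite_subset)
  have "?E \<subseteq> {..<n} \<times> {..<n}" using sub by auto
  then have "finite ?E" by (rule finite_subset) auto
  then have "wf (?E\<inverse>)"
    using finite_acyclic_wf_converse assms(3) by (simp add: cpnet_acyclic_def)
  then have "(\<Sum>i<n. m ^ card (Pa i)) \<le> (\<Sum>j<n. m ^ min j k)"
    using sum_power_card_le_if_wf[of m "{..<n}" "?E\<inverse>" Pa k] assms(1,4) sub
    by (auto simp: k_bounded_def)
  moreover have "cpnet_size n m Pa cpt \<le> (\<Sum>i<n. m ^ card (Pa i))"
    unfolding cpnet_size_def using fin by (intro sum_mono cpt_size_le) auto
  ultimately show ?thesis by linarith
qed

definition less_on :: "nat \<Rightarrow> (nat \<times> nat) set" where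
  "less_on m = {(a, b). a < b \<and> b < m}"

lemma is_strict_total_order_less_on: "is_strict_total_order m (less_on m)"
  unfolding is_strict_total_order_def strict_linear_order_on_def less_on_def
    trans_def irrefl_def total_on_def
  by auto

lemma is_strict_total_order_converse_less_on: "is_strict_total_order m ((less_on m)\<inverse>)"
  unfolding is_strict_total_order_def strict_linear_order_on_def less_on_def
    trans_def irrefl_def total_on_def
  by auto

definition parity_cpt ::
    "nat \<Rightarrow> (nat \<Rightarrow> nat set) \<Rightarrow> nat \<Rightarrow> (nat \<Rightarrow> nat) \<Rightarrow> (nat \<times> nat) set option" where
  "parity_cpt m Pa i g = Some (if even (\<Sum>l\<in>Pa i. g l) then less_on m else (less_on m)\<inverse>)"

lemma cpt_size_parity_cpt:
  "finite (Pa i) \<Longrightarrow> cpt_size m Pa (parity_cpt m Pa) i = m ^ card (Pa i)"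
  by (simp add: cpt_size_def parity_cpt_def card_assignments)

lemma cpnet_parity_cpt:
  assumes "m \<ge> 2" and "\<forall>i<n. Pa i \<subseteq> {..<n} - {i}"
  shows "cpnet n m Pa (parity_cpt m Pa)"
proof -
  have "less_on m \<noteq> (less_on m)\<inverse>"
  proof
    assume "less_on m = (less_on m)\<inverse>"
    moreover have "(0, 1) \<in> less_on m" using assms(1) by (auto simp: less_on_def)
    ultimately show False by (auto simp: less_on_def)
  qed
  have non_dummy: "\<exists>g\<in>assignments m (Pa i). \<exists>g'\<in>assignments m (Pa i).
      (\<forall>l\<in>Pa i - {j}. g l = g' l) \<and> parity_cpt m Pa i g \<noteq> parity_cpt m Pa i g'"
    if "i < n" "j \<in> Pa i" for i j
  proof -
    \<comment> \<open>raising the value of v_j from 0 to 1 flips the parity\<close>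
    define g where "g = restrict (\<lambda>_. 0::nat) (Pa i)"
    define g' where "g' = restrict (\<lambda>l. if l = j then 1 else 0::nat) (Pa i)"
    have "finite (Pa i)" using assms(2) \<open>i < n\<close> finite_subset by blast
    then have "(\<Sum>l\<in>Pa i. g' l) = 1"
      using \<open>j \<in> Pa i\<close> by (simp add: g'_def sum.If_cases)
    moreover have "(\<Sum>l\<in>Pa i. g l) = 0" by (simp add: g_def)
    ultimately have "parity_cpt m Pa i g \<noteq> parity_cpt m Pa i g'"
      using \<open>less_on m \<noteq> (less_on m)\<inverse>\<close> by (simp add: parity_cpt_def)
    moreover have "g \<in> assignments m (Pa i)" "g' \<in> assignments m (Pa i)"
      using assms(1) by (auto simp: assignments_def g_def g'_def)
    moreover have "\<forall>l\<in>Pa i - {j}. g l = g' l" by (auto simp: g_def g'_def)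
    ultimately show ?thesis by blast
  qed
  show ?thesis
    unfolding cpnet_def using assms(2) non_dummy
    by (auto simp: parity_cpt_def is_strict_total_order_less_on
        is_strict_total_order_converse_less_on)
qed

lemma cpnet_acyclic_if_parents_below: "(\<forall>i<n. \<forall>j\<in>Pa i. j < i) \<Longrightarrow> cpnet_acyclic n Pa"
  unfolding cpnet_acyclic_def
  by (rule acyclic_subset[OF wf_acyclic[OF wf_less_than]]) auto

theorem lemma1:
  fixes n m k :: nat
  assumes "n \<ge> 1" and "m \<ge> 2" and "k \<le> n - 1"
  shows "(\<exists>Pa cpt. cpnet n m Pa cpt \<and> cpnet_acyclic n Pa \<and> k_bounded n k Pa \<and>
            real (cpnet_size n m Pa cpt) = real (n - k) * real m ^ k + (real m ^ k - 1) / (real m - 1))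
       \<and> (\<forall>Pa cpt. cpnet n m Pa cpt \<and> cpnet_acyclic n Pa \<and> k_bounded n k Pa \<longrightarrow>
            real (cpnet_size n m Pa cpt) \<le> real (n - k) * real m ^ k + (real m ^ k - 1) / (real m - 1))"
proof -
  have formula: "real (\<Sum>j<n. m ^ min j k) = real (n - k) * real m ^ k + (real m ^ k - 1) / (real m - 1)"
    using assms by (intro sum_power_min_eq) auto
  define Pa :: "nat \<Rightarrow> nat set" where "Pa i = {..<min i k}" for i
  have "cpnet n m Pa (parity_cpt m Pa)"
    using assms(2) by (intro cpnet_parity_cpt) (auto simp: Pa_def)
  moreover have "cpnet_acyclic n Pa" by (intro cpnet_acyclic_if_parents_below) (auto simp: Pa_def)
  moreover have "k_bounded n k Pa" by (auto simp: k_bounded_def Pa_def)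
  moreover have "cpnet_size n m Pa (parity_cpt m Pa) = (\<Sum>i<n. m ^ min i k)"
    unfolding cpnet_size_def by (intro sum.cong) (auto simp: cpt_size_parity_cpt Pa_def)
  moreover have "cpnet_size n m Pa' cpt \<le> (\<Sum>j<n. m ^ min j k)"
    if "cpnet n m Pa' cpt" "cpnet_acyclic n Pa'" "k_bounded n k Pa'" for Pa' cpt
    using cpnet_size_le[OF _ that] assms(2) by simp
  ultimately show ?thesis using formula by (metis of_nat_mono)
qed

end
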